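(* Let $S$ be a rectangular band semigroup and let $\omega$ be a separable weight on $S$. Then $\ell^{1}(S,\omega)$ is biprojective, and hence biflat.
   Context: A band semigroup is a semigroup $S$ with $s^2=s$ for all $s\in S$; it is a rectangular band semigroup if moreover $sts=s$ for all $s,t\in S$. Every rectangular band semigroup is isomorphic to $L\times R$ (coordinatewise product) where $L$ is a left zero semigroup ($st=s$ for all $s,t$) and $R$ is a right zero semigroup ($st=t$ for all $s,t$). A weight on a semigroup $S$ is a function $\omega:S\to(0,\infty)$ with $\omega(st)\le\omega(s)\omega(t)$. For $S=S_1\times S_2$, a weight $\omega$ on $S$ is separable if there are weights $\omega_1$ on $S_1$ and $\omega_2$ on $S_2$ with $\omega(s_1,s_2)=\omega_1(s_1)\omega_2(s_2)$; here $S$ is identified with $L\times R$. The Beurling algebra $\ell^{1}(S,\omega)$ is the space of $f=\sum_s f(s)\delta_s$ with $\sum_s|f(s)|\omega(s)<\infty$, with convolution $\delta_s*\delta_t=\delta_{st}$. A Banach algebra $\mathcal{A}$ is biprojective if there is a bounded $\mathcal{A}$-bimodule homomorphism $\rho:\mathcal{A}\to\mathcal{A}\hat{\otimes}\mathcal{A}$ with $\pi\circ\rho=I_{\mathcal{A}}$, where $\pi(a\otimes b)=ab$; it is biflat if there is a bounded $\mathcal{A}$-bimodule homomorphism $\rho:\mathcal{A}\to(\mathcal{A}\hat{\otimes}\mathcal{A})^{**}$ with $\pi^{**}\circ\rho=k_{\mathcal{A}}$, the canonical embedding $\mathcal{A}\to\mathcal{A}^{**}$. *)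

theory Defs
  imports "HOL-Analysis.Analysis"
begin

text \<open>A semigroup is a type 's with a binary operation m; S is the whole type.\<close>

definition rect_band :: "('s \<Rightarrow> 's \<Rightarrow> 's) \<Rightarrow> bool" where
  "rect_band m \<longleftrightarrow>
     (\<forall>a b c. m (m a b) c = m a (m b c)) \<and> (\<forall>s. m s s = s) \<and> (\<forall>s t. m (m s t) s = s)"

definition is_weight :: "('s \<Rightarrow> 's \<Rightarrow> 's) \<Rightarrow> ('s \<Rightarrow> real) \<Rightarrow> bool" where
  "is_weight m w \<longleftrightarrow> (\<forall>s. 0 < w s) \<and> (\<forall>s t. w (m s t) \<le> w s * w t)"

text \<open>Identification of S with L x R (L left zero, R right zero, coordinatewise product).\<close>
definition rect_band_iso :: "('s \<Rightarrow> 's \<Rightarrow> 's) \<Rightarrow> ('s \<Rightarrow> 'l \<times> 'r) \<Rightarrow> bool" where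
  "rect_band_iso m \<phi> \<longleftrightarrow> bij \<phi> \<and> (\<forall>s t. \<phi> (m s t) = (fst (\<phi> s), snd (\<phi> t)))"

text \<open>Separable weight w.r.t. the identification phi: w = w1 (x) w2 with w1 a weight on the
  left zero semigroup L and w2 a weight on the right zero semigroup R.\<close>
definition separable_weight :: "('s \<Rightarrow> 'l \<times> 'r) \<Rightarrow> ('s \<Rightarrow> real) \<Rightarrow> bool" where
  "separable_weight \<phi> w \<longleftrightarrow>
     (\<exists>(w1 :: 'l \<Rightarrow> real) (w2 :: 'r \<Rightarrow> real).
        is_weight (\<lambda>a b. a) w1 \<and> is_weight (\<lambda>a b. b) w2 \<and>
        (\<forall>s. w s = w1 (fst (\<phi> s)) * w2 (snd (\<phi> s))))"

definition l1 :: "('a \<Rightarrow> real) \<Rightarrow> ('a \<Rightarrow> complex) set" where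
  "l1 w = {f. (\<lambda>s. norm (f s) * w s) summable_on UNIV}"

definition l1_norm :: "('a \<Rightarrow> real) \<Rightarrow> ('a \<Rightarrow> complex) \<Rightarrow> real" where
  "l1_norm w f = (\<Sum>\<^sub>\<infinity>s. norm (f s) * w s)"

text \<open>Convolution: delta_s * delta_t = delta_(st).\<close>
definition conv :: "('s \<Rightarrow> 's \<Rightarrow> 's) \<Rightarrow> ('s \<Rightarrow> complex) \<Rightarrow> ('s \<Rightarrow> complex) \<Rightarrow> 's \<Rightarrow> complex" where
  "conv m f g u = (\<Sum>\<^sub>\<infinity>(s, t)\<in>{(s, t). m s t = u}. f s * g t)"

section \<open>The projective tensor product l1(S,w) (x)^ l1(S,w) = l1(S x S, w x w)\<close>

definition tw :: "('s \<Rightarrow> real) \<Rightarrow> ('s \<times> 's \<Rightarrow> real)" where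
  "tw w = (\<lambda>(s, t). w s * w t)"

text \<open>Product map pi(a (x) b) = ab, i.e. pi(delta_(s,t)) = delta_(st).\<close>
definition tpi :: "('s \<Rightarrow> 's \<Rightarrow> 's) \<Rightarrow> ('s \<times> 's \<Rightarrow> complex) \<Rightarrow> 's \<Rightarrow> complex" where
  "tpi m F u = (\<Sum>\<^sub>\<infinity>(s, t)\<in>{(s, t). m s t = u}. F (s, t))"

text \<open>Bimodule actions a.(b (x) c) = ab (x) c and (b (x) c).a = b (x) ca.\<close>
definition tlact :: "('s \<Rightarrow> 's \<Rightarrow> 's) \<Rightarrow> ('s \<Rightarrow> complex) \<Rightarrow> ('s \<times> 's \<Rightarrow> complex) \<Rightarrow> 's \<times> 's \<Rightarrow> complex" where
  "tlact m a F = (\<lambda>(u, t). \<Sum>\<^sub>\<infinity>(x, s)\<in>{(x, s). m x s = u}. a x * F (s, t))"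

definition tract :: "('s \<Rightarrow> 's \<Rightarrow> 's) \<Rightarrow> ('s \<times> 's \<Rightarrow> complex) \<Rightarrow> ('s \<Rightarrow> complex) \<Rightarrow> 's \<times> 's \<Rightarrow> complex" where
  "tract m F a = (\<lambda>(s, u). \<Sum>\<^sub>\<infinity>(t, y)\<in>{(t, y). m t y = u}. F (s, t) * a y)"

section \<open>Duals and biduals (functionals are represented by their values on the carrier)\<close>

definition clinear_on :: "('a \<Rightarrow> complex) set \<Rightarrow> (('a \<Rightarrow> complex) \<Rightarrow> complex) \<Rightarrow> bool" where
  "clinear_on X \<psi> \<longleftrightarrow> (\<forall>f\<in>X. \<forall>g\<in>X. \<forall>c. \<psi> (\<lambda>x. f x + c * g x) = \<psi> f + c * \<psi> g)"

definition dual :: "('a \<Rightarrow> complex) set \<Rightarrow> (('a \<Rightarrow> complex) \<Rightarrow> real)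
                     \<Rightarrow> (('a \<Rightarrow> complex) \<Rightarrow> complex) set" where
  "dual X N = {\<psi>. clinear_on X \<psi> \<and> (\<exists>K. \<forall>f\<in>X. norm (\<psi> f) \<le> K * N f)}"

definition dual_norm :: "('a \<Rightarrow> complex) set \<Rightarrow> (('a \<Rightarrow> complex) \<Rightarrow> real)
                     \<Rightarrow> (('a \<Rightarrow> complex) \<Rightarrow> complex) \<Rightarrow> real" where
  "dual_norm X N \<psi> = Sup ((\<lambda>f. norm (\<psi> f)) ` {f\<in>X. N f \<le> 1})"

definition biprojective_l1 :: "('s \<Rightarrow> 's \<Rightarrow> 's) \<Rightarrow> ('s \<Rightarrow> real) \<Rightarrow> bool" where
  "biprojective_l1 m w \<longleftrightarrow>
    (\<exists>(\<rho> :: ('s \<Rightarrow> complex) \<Rightarrow> ('s \<times> 's \<Rightarrow> complex)) C.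
       (\<forall>a\<in>l1 w. \<rho> a \<in> l1 (tw w)) \<and>
       (\<forall>a\<in>l1 w. \<forall>b\<in>l1 w. \<forall>c. \<rho> (\<lambda>x. a x + c * b x) = (\<lambda>p. \<rho> a p + c * \<rho> b p)) \<and>
       (\<forall>a\<in>l1 w. l1_norm (tw w) (\<rho> a) \<le> C * l1_norm w a) \<and>
       (\<forall>a\<in>l1 w. \<forall>b\<in>l1 w. \<rho> (conv m a b) = tlact m a (\<rho> b) \<and> \<rho> (conv m b a) = tract m (\<rho> b) a) \<and>
       (\<forall>a\<in>l1 w. tpi m (\<rho> a) = a))"

definition biflat_l1 :: "('s \<Rightarrow> 's \<Rightarrow> 's) \<Rightarrow> ('s \<Rightarrow> real) \<Rightarrow> bool" where
  "biflat_l1 m w \<longleftrightarrow>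
    (let T = l1 (tw w); NT = l1_norm (tw w); TD = dual T NT;
         A = l1 w; NA = l1_norm w; AD = dual A NA
     in
    (\<exists>(\<rho> :: ('s \<Rightarrow> complex) \<Rightarrow> ((('s \<times> 's \<Rightarrow> complex) \<Rightarrow> complex) \<Rightarrow> complex)) C.
       (\<forall>a\<in>A. \<rho> a \<in> dual TD (dual_norm T NT)) \<and>
       (\<forall>a\<in>A. \<forall>b\<in>A. \<forall>c. \<forall>\<psi>\<in>TD. \<rho> (\<lambda>x. a x + c * b x) \<psi> = \<rho> a \<psi> + c * \<rho> b \<psi>) \<and>
       (\<forall>a\<in>A. dual_norm TD (dual_norm T NT) (\<rho> a) \<le> C * NA a) \<and>
       (\<forall>a\<in>A. \<forall>b\<in>A. \<forall>\<psi>\<in>TD.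
           \<rho> (conv m a b) \<psi> = \<rho> b (\<lambda>F. \<psi> (tlact m a F)) \<and>
           \<rho> (conv m b a) \<psi> = \<rho> b (\<lambda>F. \<psi> (tract m F a))) \<and>
       (\<forall>a\<in>A. \<forall>\<psi>\<in>AD. \<rho> a (\<lambda>F. \<psi> (tpi m F)) = \<psi> a)))"

end

(* Fix any e in S. A product in a rectangular band depends only on its first and last
   factor, so u \<mapsto> (ue, eu) maps S bijectively onto {(p, q). pe = p, eq = q}, with inverse
   (p, q) \<mapsto> pq. Hence \<delta>_u \<mapsto> \<delta>_ue \<otimes> \<delta>_eu extends to a right inverse of the product map \<pi>,
   and reindexing the convolution sums along such bijections shows that it is a bimodule map.
   It is bounded as soon as \<omega>(ue) \<omega>(eu) \<le> C \<omega>(u), and for a separable weight this holds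
   with equality for C = \<omega>(e). Composing with the
   canonical embedding into the bidual turns biprojectivity into biflatness. *)

theory Submission
  imports Defs
begin

lemma rect_band_mult_assoc:
  assumes "rect_band m" shows "m (m x y) z = m x (m y z)"
  using assms unfolding rect_band_def by blast

lemma rect_band_mult_idem:
  assumes "rect_band m" shows "m x x = x"
  using assms unfolding rect_band_def by blast

lemma rect_band_mult_absorb:
  assumes "rect_band m" shows "m (m x y) x = x"
  using assms unfolding rect_band_def by blast

lemma rect_band_mult_middle:
  assumes "rect_band m" shows "m x (m y z) = m x z"
proof -
  have "m x (m y z) = m (m (m x z) x) (m y z)"
    using rect_band_mult_absorb[OF assms] by simp
  also have "\<dots> = m x (m (m z (m x y)) z)"
    by (simp only: rect_band_mult_assoc[OF assms])
  also have "\<dots> = m x z"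
    by (simp only: rect_band_mult_absorb[OF assms])
  finally show ?thesis .
qed

lemma rect_band_mult_eq_right_cong:
  assumes "rect_band m" and "m x y = m p q" shows "m x z = m p z"
  by (metis assms rect_band_mult_assoc rect_band_mult_middle)

lemma rect_band_mult_eq_left_cong:
  assumes "rect_band m" and "m x y = m p q" shows "m z y = m z q"
  by (metis assms rect_band_mult_middle)

lemmas rect_band_simps = rect_band_mult_assoc rect_band_mult_idem rect_band_mult_middle

(* In coordinates S = L \<times> R with e = (l0, r0), band_split m e sends \<delta>_(l, r) to
   \<delta>_(l, r0) \<otimes> \<delta>_(l0, r), the splitting map of the paper. *)
definition band_split_support :: "('s \<Rightarrow> 's \<Rightarrow> 's) \<Rightarrow> 's \<Rightarrow> ('s \<times> 's) set" where
  "band_split_support m e = {(p, q). m p e = p \<and> m e q = q}"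

definition band_split :: "('s \<Rightarrow> 's \<Rightarrow> 's) \<Rightarrow> 's \<Rightarrow> ('s \<Rightarrow> complex) \<Rightarrow> 's \<times> 's \<Rightarrow> complex" where
  "band_split m e a = (\<lambda>(p, q). if (p, q) \<in> band_split_support m e then a (m p q) else 0)"

lemma bij_betw_band_split_support:
  assumes "rect_band m"
  shows "bij_betw (\<lambda>u. (m u e, m e u)) UNIV (band_split_support m e)"
  by (rule bij_betw_byWitness[where f' = "\<lambda>(p, q). m p q"])
     (auto simp: band_split_support_def rect_band_simps[OF assms])

lemma band_split_apply:
  assumes "rect_band m"
  shows "band_split m e a (m u e, m e u) = a u"
  by (simp add: band_split_def band_split_support_def rect_band_simps[OF assms])

lemma band_split_outside:
  "z \<notin> band_split_support m e \<Longrightarrow> band_split m e a z = 0"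
  by (cases z) (simp add: band_split_def)

lemma has_sum_band_split_norm:
  assumes "rect_band m"
  shows "((\<lambda>z. norm (band_split m e a z) * tw w z) has_sum S) UNIV \<longleftrightarrow>
         ((\<lambda>u. norm (a u) * (w (m u e) * w (m e u))) has_sum S) UNIV"
proof -
  have "((\<lambda>z. norm (band_split m e a z) * tw w z) has_sum S) UNIV \<longleftrightarrow>
        ((\<lambda>z. norm (band_split m e a z) * tw w z) has_sum S) (band_split_support m e)"
    by (rule has_sum_cong_neutral) (auto simp: band_split_outside)
  also have "\<dots> \<longleftrightarrow> ((\<lambda>u. norm (band_split m e a (m u e, m e u)) * tw w (m u e, m e u)) has_sum S) UNIV"
    by (rule has_sum_reindex_bij_betw[OF bij_betw_band_split_support[OF assms], symmetric])
  finally show ?thesis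
    by (simp add: band_split_apply[OF assms] tw_def)
qed

lemma band_split_l1:
  assumes "rect_band m" and "\<And>s. 0 \<le> w s" and "\<And>u. w (m u e) * w (m e u) \<le> C * w u"
    and "a \<in> l1 w"
  shows "band_split m e a \<in> l1 (tw w)" and "l1_norm (tw w) (band_split m e a) \<le> C * l1_norm w a"
proof -
  let ?f = "\<lambda>u. norm (a u) * (w (m u e) * w (m e u))"
  have a: "(\<lambda>u. norm (a u) * w u) summable_on UNIV"
    using assms(4) unfolding l1_def by blast
  have bound: "?f u \<le> C * (norm (a u) * w u)" for u
  proof -
    have "?f u \<le> norm (a u) * (C * w u)"
      by (rule mult_left_mono[OF assms(3)]) simp
    then show ?thesis by (simp only: mult.left_commute)
  qed
  have "?f summable_on UNIV"
    by (rule summable_on_comparison_test[OF summable_on_cmult_right[OF a] bound])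
       (simp add: assms(2))
  then have split: "((\<lambda>z. norm (band_split m e a z) * tw w z) has_sum infsum ?f UNIV) UNIV"
    by (simp only: has_sum_band_split_norm[OF assms(1)] has_sum_infsum)
  then show "band_split m e a \<in> l1 (tw w)"
    unfolding l1_def by (blast dest: has_sum_imp_summable)
  have "l1_norm (tw w) (band_split m e a) = infsum ?f UNIV"
    using split by (simp add: l1_norm_def infsumI)
  also have "\<dots> \<le> (\<Sum>\<^sub>\<infinity>u. C * (norm (a u) * w u))"
    by (rule infsum_mono[OF \<open>?f summable_on UNIV\<close> summable_on_cmult_right[OF a] bound])
  also have "\<dots> = C * l1_norm w a"
    by (simp add: l1_norm_def infsum_cmult_right')
  finally show "l1_norm (tw w) (band_split m e a) \<le> C * l1_norm w a" .
qed

lemma tpi_band_split: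
  assumes "rect_band m"
  shows "tpi m (band_split m e a) = a"
proof
  fix u
  have "tpi m (band_split m e a) u = (\<Sum>\<^sub>\<infinity>z\<in>{(s, t). m s t = u}. band_split m e a z)"
    by (simp add: tpi_def case_prod_beta')
  also have "\<dots> = (\<Sum>\<^sub>\<infinity>z\<in>{(m u e, m e u)}. band_split m e a z)"
  proof (rule infsum_cong_neutral)
    fix z assume "z \<in> {(s, t). m s t = u} - {(m u e, m e u)}"
    then obtain s t where z: "z = (s, t)" "u = m s t" "(s, t) \<noteq> (m u e, m e u)" by auto
    then have "(s, t) \<notin> band_split_support m e"
      by (auto simp: band_split_support_def rect_band_simps[OF assms])
    then show "band_split m e a z = 0" using z(1) by (simp add: band_split_outside)
  qed (auto simp: rect_band_simps[OF assms])
  finally show "tpi m (band_split m e a) u = a u"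
    by (simp add: band_split_apply[OF assms])
qed

lemma rect_band_bij_betw_factorisations:
  assumes "rect_band m" and pe: "m p e = p"
  shows "bij_betw (\<lambda>(x, s). (x, m s q)) {(x, s). m x s = p \<and> m s e = s} {(x, y). m x y = m p q}"
    (is "bij_betw _ ?E ?B")
proof (rule bij_betw_byWitness[where f' = "\<lambda>(x, y). (x, m y e)"])
  note simps = rect_band_simps[OF assms(1)]
  show "\<forall>z\<in>?E. (\<lambda>(x, y). (x, m y e)) ((\<lambda>(x, s). (x, m s q)) z) = z"
    by (auto simp: simps)
  show "(\<lambda>(x, s). (x, m s q)) ` ?E \<subseteq> ?B"
    by (auto simp: simps)
  show "\<forall>z\<in>?B. (\<lambda>(x, s). (x, m s q)) ((\<lambda>(x, y). (x, m y e)) z) = z"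
  proof
    fix z assume "z \<in> ?B"
    then obtain x y where z: "z = (x, y)" and xy: "m x y = m p q" by auto
    from rect_band_mult_eq_left_cong[OF assms(1) xy] have "m y y = m y q" .
    then show "(\<lambda>(x, s). (x, m s q)) ((\<lambda>(x, y). (x, m y e)) z) = z"
      by (simp add: z simps)
  qed
  show "(\<lambda>(x, y). (x, m y e)) ` ?B \<subseteq> ?E"
  proof
    fix z assume "z \<in> (\<lambda>(x, y). (x, m y e)) ` ?B"
    then obtain x y where z: "z = (x, m y e)" and xy: "m x y = m p q" by auto
    from rect_band_mult_eq_right_cong[OF assms(1) xy] have "m x e = m p e" .
    then show "z \<in> ?E" by (simp add: z simps pe)
  qed
qed

lemma tlact_band_split:
  assumes "rect_band m"
  shows "tlact m a (band_split m e b) = band_split m e (conv m a b)"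
proof (intro ext, clarify)
  note simps = rect_band_simps[OF assms]
  fix p q
  show "tlact m a (band_split m e b) (p, q) = band_split m e (conv m a b) (p, q)"
  proof (cases "(p, q) \<in> band_split_support m e")
    case False
    have "(s, q) \<notin> band_split_support m e" if "m x s = p" for x s
      using False that by (auto simp: band_split_support_def simps)
    then show ?thesis
      using False by (auto simp: tlact_def band_split_outside intro!: infsum_0)
  next
    case True
    then have pe: "m p e = p" and eq: "m e q = q" by (auto simp: band_split_support_def)
    define E where "E = {(x, s). m x s = p \<and> m s e = s}"
    define B where "B = {(x, y). m x y = m p q}"
    have bij: "bij_betw (\<lambda>(x, s). (x, m s q)) E B"
      unfolding E_def B_def by (rule rect_band_bij_betw_factorisations[OF assms pe])
    have "tlact m a (band_split m e b) (p, q) = (\<Sum>\<^sub>\<infinity>(x, s)\<in>E. a x * b (m s q))"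
      unfolding tlact_def
      by (auto intro!: infsum_cong_neutral simp: E_def band_split_def band_split_support_def eq
          split: if_splits)
    also have "\<dots> = (\<Sum>\<^sub>\<infinity>(x, y)\<in>B. a x * b y)"
      using infsum_reindex_bij_betw[OF bij, of "\<lambda>(x, y). a x * b y"]
      by (simp add: case_prod_beta')
    also have "\<dots> = band_split m e (conv m a b) (p, q)"
      using True by (simp add: band_split_def conv_def B_def)
    finally show ?thesis .
  qed
qed

lemma rect_band_opposite: "rect_band m \<Longrightarrow> rect_band (\<lambda>x y. m y x)"
  unfolding rect_band_def by metis

lemma band_split_opposite: "band_split (\<lambda>x y. m y x) e a = band_split m e a \<circ> prod.swap"
  by (auto simp: band_split_def band_split_support_def)

lemma bij_betw_swap_fibre: "bij_betw prod.swap {(s, t). f t s = u} {(s, t). f s t = u}"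
  by (rule bij_betw_byWitness[where f' = prod.swap]) auto

lemma conv_opposite: "conv (\<lambda>x y. m y x) a b = conv m b a"
proof
  fix u
  have "conv m b a u = (\<Sum>\<^sub>\<infinity>z\<in>{(s, t). m t s = u}. (\<lambda>(s, t). b s * a t) (prod.swap z))"
    unfolding conv_def by (rule infsum_reindex_bij_betw[OF bij_betw_swap_fibre, symmetric])
  then show "conv (\<lambda>x y. m y x) a b u = conv m b a u"
    by (simp add: conv_def case_prod_beta' mult.commute)
qed

lemma tract_eq_tlact_opposite:
  "tract m F a (s, u) = tlact (\<lambda>x y. m y x) a (F \<circ> prod.swap) (u, s)"
proof -
  have "tract m F a (s, u) =
        (\<Sum>\<^sub>\<infinity>z\<in>{(x, t). m t x = u}. (\<lambda>(t, y). F (s, t) * a y) (prod.swap z))"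
    unfolding tract_def prod.case by (rule infsum_reindex_bij_betw[OF bij_betw_swap_fibre, symmetric])
  then show ?thesis
    by (simp add: tlact_def case_prod_beta' mult.commute)
qed

lemma tract_band_split:
  assumes "rect_band m"
  shows "tract m (band_split m e b) a = band_split m e (conv m b a)"
proof (intro ext, clarify)
  fix s u
  let ?m' = "\<lambda>x y. m y x"
  have "tract m (band_split m e b) a (s, u) = tlact ?m' a (band_split ?m' e b) (u, s)"
    unfolding tract_eq_tlact_opposite band_split_opposite[of m] ..
  also have "\<dots> = band_split ?m' e (conv ?m' a b) (u, s)"
    unfolding tlact_band_split[OF rect_band_opposite[OF assms]] ..
  also have "\<dots> = band_split m e (conv m b a) (s, u)"
    unfolding conv_opposite[of m] band_split_opposite[of m] by simp
  finally show "tract m (band_split m e b) a (s, u) = band_split m e (conv m b a) (s, u)" .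
qed

lemma biprojective_l1_rect_band:
  assumes "rect_band m" and "\<And>s. 0 \<le> w s" and "\<And>u. w (m u e) * w (m e u) \<le> C * w u"
  shows "biprojective_l1 m w"
proof -
  have "band_split m e (\<lambda>x. a x + c * b x) = (\<lambda>z. band_split m e a z + c * band_split m e b z)"
    for a b c
    by (auto simp: band_split_def)
  then show ?thesis
    unfolding biprojective_l1_def
    using band_split_l1[OF assms] tlact_band_split[OF assms(1)] tract_band_split[OF assms(1)]
      tpi_band_split[OF assms(1)]
    by (intro exI[of _ "band_split m e"] exI[of _ C]) auto
qed

lemma separable_weight_mult:
  assumes "rect_band_iso m \<phi>" and "separable_weight \<phi> w"
  shows "w (m u e) * w (m e u) = w e * w u"
proof -
  have hom: "\<And>s t. \<phi> (m s t) = (fst (\<phi> s), snd (\<phi> t))"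
    using assms(1) by (simp add: rect_band_iso_def)
  obtain w1 w2 where "\<And>s. w s = w1 (fst (\<phi> s)) * w2 (snd (\<phi> s))"
    using assms(2) by (auto simp: separable_weight_def)
  then show ?thesis by (simp add: hom mult_ac)
qed

lemma l1_cmult: "F \<in> l1 v \<Longrightarrow> (\<lambda>x. c * F x) \<in> l1 v"
  unfolding l1_def by (auto simp: norm_mult mult.assoc intro: summable_on_cmult_right)

lemma l1_norm_cmult: "l1_norm v (\<lambda>x. c * F x) = norm c * l1_norm v F"
  unfolding l1_norm_def by (simp add: norm_mult mult.assoc infsum_cmult_right')

lemma l1_zero: "(\<lambda>x. 0) \<in> l1 v"
  by (simp add: l1_def)

lemma l1_norm_nonneg: "(\<And>x. 0 \<le> v x) \<Longrightarrow> 0 \<le> l1_norm v F"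
  unfolding l1_norm_def by (intro infsum_nonneg) auto

lemma clinear_on_cmult:
  assumes "clinear_on X \<psi>" and "(\<lambda>x. 0) \<in> X" and "F \<in> X"
  shows "\<psi> (\<lambda>x. c * F x) = c * \<psi> F"
proof -
  have add: "\<psi> (\<lambda>x. f x + c * g x) = \<psi> f + c * \<psi> g" if "f \<in> X" "g \<in> X" for f g c
    using assms(1) that unfolding clinear_on_def by blast
  have "\<psi> (\<lambda>x. 0) = 0"
    using add[OF assms(2) assms(2), of 1] by simp
  then show ?thesis
    using add[OF assms(2) assms(3), of c] by simp
qed

lemma norm_le_dual_norm_l1:
  assumes "\<And>x. 0 \<le> v x" and "\<psi> \<in> dual (l1 v) (l1_norm v)" and "F \<in> l1 v"
  shows "norm (\<psi> F) \<le> dual_norm (l1 v) (l1_norm v) \<psi> * l1_norm v F"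
proof -
  have lin: "clinear_on (l1 v) \<psi>" using assms(2) by (simp add: dual_def)
  obtain K where K: "\<And>f. f \<in> l1 v \<Longrightarrow> norm (\<psi> f) \<le> K * l1_norm v f"
    using assms(2) by (auto simp: dual_def)
  have bdd: "bdd_above ((\<lambda>f. norm (\<psi> f)) ` {f \<in> l1 v. l1_norm v f \<le> 1})"
  proof (rule bdd_aboveI2)
    fix f assume f: "f \<in> {f \<in> l1 v. l1_norm v f \<le> 1}"
    then have "norm (\<psi> f) \<le> K * l1_norm v f" using K by blast
    also have "\<dots> \<le> \<bar>K\<bar> * 1"
      using f l1_norm_nonneg[of v f, OF assms(1)] by (intro mult_mono) auto
    finally show "norm (\<psi> f) \<le> \<bar>K\<bar>" by simp
  qed
  show ?thesis
  proof (cases "l1_norm v F = 0")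
    case True
    then show ?thesis using K[OF assms(3)] by simp
  next
    case False
    then have pos: "0 < l1_norm v F" using l1_norm_nonneg[of v F, OF assms(1)] by simp
    define c :: complex where "c = 1 / l1_norm v F"
    have "(\<lambda>x. c * F x) \<in> l1 v"
      using assms(3) by (rule l1_cmult)
    moreover have "l1_norm v (\<lambda>x. c * F x) = 1"
      unfolding l1_norm_cmult c_def using pos by (simp add: norm_divide)
    ultimately have "norm (\<psi> (\<lambda>x. c * F x)) \<le> dual_norm (l1 v) (l1_norm v) \<psi>"
      unfolding dual_norm_def by (intro cSup_upper[OF _ bdd]) auto
    moreover have "\<psi> (\<lambda>x. c * F x) = c * \<psi> F"
      using lin l1_zero assms(3) by (rule clinear_on_cmult)
    ultimately show ?thesis
      using pos by (simp add: c_def norm_mult norm_divide divide_le_eq mult.commute)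
  qed
qed

lemma dual_norm_le:
  assumes "\<exists>f\<in>X. N f \<le> 1" and "\<And>f. f \<in> X \<Longrightarrow> N f \<le> 1 \<Longrightarrow> norm (\<psi> f) \<le> B"
  shows "dual_norm X N \<psi> \<le> B"
  unfolding dual_norm_def using assms by (intro cSup_least) auto

lemma eval_in_bidual_l1:
  assumes "\<And>x. 0 \<le> v x" and "F \<in> l1 v"
  shows "(\<lambda>\<psi>. \<psi> F) \<in> dual (dual (l1 v) (l1_norm v)) (dual_norm (l1 v) (l1_norm v))"
    and "dual_norm (dual (l1 v) (l1_norm v)) (dual_norm (l1 v) (l1_norm v)) (\<lambda>\<psi>. \<psi> F)
           \<le> l1_norm v F"
proof -
  let ?D = "dual (l1 v) (l1_norm v)" and ?N = "dual_norm (l1 v) (l1_norm v)"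
  have bound: "norm (\<psi> F) \<le> l1_norm v F * ?N \<psi>" if "\<psi> \<in> ?D" for \<psi>
    using norm_le_dual_norm_l1[OF assms(1) that assms(2)] by (simp add: mult.commute)
  then show "(\<lambda>\<psi>. \<psi> F) \<in> dual ?D ?N"
    by (auto simp: dual_def clinear_on_def)
  have "(\<lambda>f. 0) \<in> ?D"
    by (auto simp: dual_def clinear_on_def intro: exI[of _ 0])
  moreover have "?N (\<lambda>f. 0) \<le> 1"
    by (intro dual_norm_le bexI[OF _ l1_zero]) (auto simp: l1_norm_def)
  moreover have "norm (\<psi> F) \<le> l1_norm v F" if "\<psi> \<in> ?D" and "?N \<psi> \<le> 1" for \<psi>
    using bound[OF that(1)] mult_left_mono[OF that(2) l1_norm_nonneg[of v F, OF assms(1)]]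
    by simp
  ultimately show "dual_norm ?D ?N (\<lambda>\<psi>. \<psi> F) \<le> l1_norm v F"
    by (intro dual_norm_le) auto
qed

lemma biprojective_l1_imp_biflat_l1:
  assumes "biprojective_l1 m w" and "\<And>s. 0 \<le> w s"
  shows "biflat_l1 m w"
proof -
  obtain \<rho> C where
    \<rho>_l1: "\<And>a. a \<in> l1 w \<Longrightarrow> \<rho> a \<in> l1 (tw w)" and
    \<rho>_linear: "\<And>a b c. a \<in> l1 w \<Longrightarrow> b \<in> l1 w \<Longrightarrow> \<rho> (\<lambda>x. a x + c * b x) = (\<lambda>p. \<rho> a p + c * \<rho> b p)" and
    \<rho>_bound: "\<And>a. a \<in> l1 w \<Longrightarrow> l1_norm (tw w) (\<rho> a) \<le> C * l1_norm w a" and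
    \<rho>_module: "\<And>a b. a \<in> l1 w \<Longrightarrow> b \<in> l1 w \<Longrightarrow>
      \<rho> (conv m a b) = tlact m a (\<rho> b) \<and> \<rho> (conv m b a) = tract m (\<rho> b) a" and
    \<rho>_section: "\<And>a. a \<in> l1 w \<Longrightarrow> tpi m (\<rho> a) = a"
    using assms(1) unfolding biprojective_l1_def by blast
  have tw: "0 \<le> tw w z" for z
    using assms(2) by (cases z) (simp add: tw_def)
  note eval = eval_in_bidual_l1[OF tw \<rho>_l1]
  have linear: "\<psi> (\<rho> (\<lambda>x. a x + c * b x)) = \<psi> (\<rho> a) + c * \<psi> (\<rho> b)"
    if "a \<in> l1 w" "b \<in> l1 w" "\<psi> \<in> dual (l1 (tw w)) (l1_norm (tw w))" for a b c \<psi>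
    using that \<rho>_l1 by (simp add: \<rho>_linear dual_def clinear_on_def)
  have bound: "dual_norm (dual (l1 (tw w)) (l1_norm (tw w))) (dual_norm (l1 (tw w)) (l1_norm (tw w)))
      (\<lambda>\<psi>. \<psi> (\<rho> a)) \<le> C * l1_norm w a" if "a \<in> l1 w" for a
    using eval(2)[OF that] \<rho>_bound[OF that] by linarith
  show ?thesis
    unfolding biflat_l1_def Let_def
  proof (intro exI[of _ "\<lambda>a \<psi>. \<psi> (\<rho> a)"] exI[of _ C] conjI ballI allI)
    fix a b \<psi> assume "a \<in> l1 w" "b \<in> l1 w"
    from \<rho>_module[OF this] show "\<psi> (\<rho> (conv m a b)) = \<psi> (tlact m a (\<rho> b))"
      and "\<psi> (\<rho> (conv m b a)) = \<psi> (tract m (\<rho> b) a)"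
      by simp_all
  qed (use eval(1) linear bound \<rho>_section in auto)
qed

theorem proposition2p3:
  fixes m :: "'s \<Rightarrow> 's \<Rightarrow> 's" and \<phi> :: "'s \<Rightarrow> 'l \<times> 'r" and w :: "'s \<Rightarrow> real"
  assumes "rect_band m"
    and "rect_band_iso m \<phi>"
    and "is_weight m w"
    and "separable_weight \<phi> w"
  shows "biprojective_l1 m w \<and> biflat_l1 m w"
proof -
  fix e :: 's
  have nonneg: "0 \<le> w s" for s
    using assms(3) by (simp add: is_weight_def less_imp_le)
  have "w (m u e) * w (m e u) \<le> w e * w u" for u
    by (simp add: separable_weight_mult[OF assms(2,4)])
  then have "biprojective_l1 m w"
    by (rule biprojective_l1_rect_band[OF assms(1) nonneg])
  then show ?thesis
    using biprojective_l1_imp_biflat_l1 nonneg by blast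
qed

end
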